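(* Let $K\subset M$ be closed subsets of $\mathbb{R}^2$. Then the following conditions are equivalent: (i) $M=K\cup C$, where $C$ is the union of a system of components of $\mathbb{R}^2\setminus K$; (ii) $\partial M\subset\partial K$. Moreover, if these conditions hold and $K\in\mathcal{D}_2$, then $M\in\mathcal{D}_2$.
   Context: A function on an open convex set $C\subset\mathbb{R}^d$ is DC if it is the difference of two convex functions on $C$. $\mathcal{D}_2$ denotes the family consisting of $\varnothing$ together with all nonempty closed sets $A\subset\mathbb{R}^2$ whose distance function $d_A=\operatorname{dist}(\cdot,A)$ is DC on $\mathbb{R}^2$. *)

theory Defs
  imports "HOL-Analysis.Analysis"
begin

definition DC_on :: "'a::real_vector set \<Rightarrow> ('a \<Rightarrow> real) \<Rightarrow> bool" where
  "DC_on C f \<longleftrightarrow> (\<exists>g h. convex_on C g \<and> convex_on C h \<and> (\<forall>x\<in>C. f x = g x - h x))"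

definition D2 :: "(real^2) set set" where
  "D2 = {{}} \<union> {A. A \<noteq> {} \<and> closed A \<and> DC_on UNIV (\<lambda>x. infdist x A)}"

end

theory Submission
  imports Defs
begin

text \<open>
  The components of the open set \<open>-K\<close> are open, so a union \<open>K \<union> \<Union>S\<close> of components has
  its frontier inside \<open>K\<close>; conversely, a component meeting \<open>M\<close> without lying in \<open>M\<close> would
  cross \<open>frontier M \<subseteq> K\<close>.  For the DC property put \<open>U = M - K\<close>, an open set with frontier
  in \<open>K\<close>.  Off \<open>M\<close> the distances to \<open>M\<close> and to \<open>K\<close> agree, since a segment from outside
  \<open>M\<close> to a point of \<open>M\<close> crosses \<open>frontier M \<subseteq> K\<close>; on \<open>M\<close> the distance to \<open>M\<close> vanishes.
  Hence if \<open>d\<^sub>K = g - h\<close> then \<open>d\<^sub>M = \<psi> - h\<close>, where \<open>\<psi>\<close> is \<open>h\<close> on \<open>U\<close> and \<open>g\<close> elsewhere;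
  \<open>\<psi>\<close> is convex because \<open>h \<le> g\<close> with equality on \<open>frontier U\<close>.
\<close>

lemma convex_on_glue_exit_point:
  fixes g h :: "'a::real_normed_vector \<Rightarrow> real"
  assumes h: "convex_on UNIV h"
    and hg: "\<And>x. h x \<le> g x" and U: "open U"
    and fr: "\<And>x. x \<in> frontier U \<Longrightarrow> g x = h x"
    and t: "0 \<le> t" "t \<le> 1" and z_notin: "(1 - t) *\<^sub>R a + t *\<^sub>R b \<notin> U"
  defines "\<psi> \<equiv> (\<lambda>x. if x \<in> U then h x else g x)"
  shows "\<exists>s. 0 \<le> s \<and> s \<le> t \<and> (1 - s) *\<^sub>R a + s *\<^sub>R b \<notin> U \<and>
           \<psi> ((1 - s) *\<^sub>R a + s *\<^sub>R b) \<le> (1 - s) * \<psi> a + s * \<psi> b"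
proof (cases "a \<in> U")
  case False
  then show ?thesis by (intro exI[of _ 0]) (auto simp: t)
next
  case True
  let ?z = "(1 - t) *\<^sub>R a + t *\<^sub>R b"
  have "closed_segment a ?z \<inter> frontier U \<noteq> {}"
    by (rule connected_Int_frontier) (use True z_notin in auto)
  then obtain p where p: "p \<in> closed_segment a ?z" "p \<in> frontier U" by blast
  then obtain u where u: "0 \<le> u" "u \<le> 1" "p = (1 - u) *\<^sub>R a + u *\<^sub>R ?z"
    unfolding closed_segment_def by blast
  have p_eq: "p = (1 - u * t) *\<^sub>R a + (u * t) *\<^sub>R b"
    using u(3) by (simp add: algebra_simps)
  have p_notin: "p \<notin> U" using p(2) U by (simp add: frontier_def interior_open)
  have ut: "0 \<le> u * t" "u * t \<le> t" using u t by (auto simp: mult_left_le_one_le)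
  have "\<psi> p = h p" using p_notin fr[OF p(2)] by (simp add: \<psi>_def)
  also have "\<dots> \<le> (1 - u * t) * h a + (u * t) * h b"
    unfolding p_eq by (rule convex_onD[OF h]) (use ut t in auto)
  also have "\<dots> \<le> (1 - u * t) * \<psi> a + (u * t) * \<psi> b"
    using ut t hg by (intro add_mono mult_left_mono) (auto simp: \<psi>_def)
  finally show ?thesis using p_notin ut p_eq by (intro exI[of _ "u * t"]) auto
qed

lemma convex_on_glue_open:
  fixes g h :: "'a::real_normed_vector \<Rightarrow> real"
  assumes g: "convex_on UNIV g" and h: "convex_on UNIV h"
    and hg: "\<And>x. h x \<le> g x" and U: "open U"
    and fr: "\<And>x. x \<in> frontier U \<Longrightarrow> g x = h x"
  shows "convex_on UNIV (\<lambda>x. if x \<in> U then h x else g x)"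
proof (rule convex_onI)
  fix t :: real and a b :: 'a
  assume t: "0 < t" "t < 1"
  define \<psi> where "\<psi> = (\<lambda>x. if x \<in> U then h x else g x)"
  have h_le: "h x \<le> \<psi> x" for x using hg by (simp add: \<psi>_def)
  let ?z = "(1 - t) *\<^sub>R a + t *\<^sub>R b"
  show "\<psi> ?z \<le> (1 - t) * \<psi> a + t * \<psi> b"
  proof (cases "?z \<in> U")
    case True
    have "\<psi> ?z = h ?z" using True by (simp add: \<psi>_def)
    also have "\<dots> \<le> (1 - t) * h a + t * h b"
      by (rule convex_onD[OF h]) (use t in auto)
    also have "\<dots> \<le> (1 - t) * \<psi> a + t * \<psi> b"
      using t h_le by (intro add_mono mult_left_mono) auto
    finally show ?thesis .
  next
    case False
    txt \<open>Leave \<open>U\<close> from both ends of the segment towards \<open>?z\<close>; between the two exit points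
      \<open>\<psi>\<close> is bounded by the convex function \<open>g\<close>.\<close>
    obtain s where s: "0 \<le> s" "s \<le> t" "(1 - s) *\<^sub>R a + s *\<^sub>R b \<notin> U"
      "\<psi> ((1 - s) *\<^sub>R a + s *\<^sub>R b) \<le> (1 - s) * \<psi> a + s * \<psi> b"
      using convex_on_glue_exit_point[OF h hg U fr, of t a b] t False
      unfolding \<psi>_def by auto
    obtain r where r: "0 \<le> r" "r \<le> 1 - t" "(1 - r) *\<^sub>R b + r *\<^sub>R a \<notin> U"
      "\<psi> ((1 - r) *\<^sub>R b + r *\<^sub>R a) \<le> (1 - r) * \<psi> b + r * \<psi> a"
      using convex_on_glue_exit_point[OF h hg U fr, of "1 - t" b a] t False
      unfolding \<psi>_def by (auto simp: add.commute)
    define s' where "s' = 1 - r"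
    have s': "t \<le> s'" "s' \<le> 1" "(1 - s') *\<^sub>R a + s' *\<^sub>R b \<notin> U"
      "\<psi> ((1 - s') *\<^sub>R a + s' *\<^sub>R b) \<le> (1 - s') * \<psi> a + s' * \<psi> b"
      using r by (auto simp: s'_def add.commute algebra_simps)
    define x where "x = (1 - s) *\<^sub>R a + s *\<^sub>R b"
    define x' where "x' = (1 - s') *\<^sub>R a + s' *\<^sub>R b"
    have gx: "g x \<le> (1 - s) * \<psi> a + s * \<psi> b"
      using s(3,4) by (simp add: \<psi>_def x_def)
    have gx': "g x' \<le> (1 - s') * \<psi> a + s' * \<psi> b"
      using s'(3,4) by (simp add: \<psi>_def x'_def)
    have \<psi>z: "\<psi> ?z = g ?z" using False by (simp add: \<psi>_def)
    show ?thesis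
    proof (cases "s = s'")
      case True
      then have "s = t" using s s' by auto
      then show ?thesis using \<psi>z gx by (simp add: x_def)
    next
      case False
      then have "s < s'" using s s' by auto
      define l where "l = (t - s) / (s' - s)"
      have l: "0 \<le> l" "l \<le> 1" using \<open>s < s'\<close> s s' by (auto simp: l_def field_simps)
      have "l * (s' - s) = t - s" using \<open>s < s'\<close> by (simp add: l_def)
      then have t_eq: "t = (1 - l) * s + l * s'" by (simp add: algebra_simps)
      have z_eq: "?z = (1 - l) *\<^sub>R x + l *\<^sub>R x'"
        unfolding x_def x'_def t_eq by (simp add: algebra_simps)
      have "g ?z \<le> (1 - l) * g x + l * g x'"
        unfolding z_eq by (rule convex_onD[OF g]) (use l in auto)
      also have "\<dots> \<le> (1 - l) * ((1 - s) * \<psi> a + s * \<psi> b) + l * ((1 - s') * \<psi> a + s' * \<psi> b)"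
        using l gx gx' by (intro add_mono mult_left_mono) auto
      also have "\<dots> = (1 - t) * \<psi> a + t * \<psi> b"
        unfolding t_eq by (simp add: algebra_simps)
      finally show ?thesis using \<psi>z by simp
    qed
  qed
qed auto

lemma closed_Un_Union_components:
  fixes K :: "'a::real_normed_vector set"
  assumes "closed K" and "S \<subseteq> components (- K)"
  shows "closed (K \<union> \<Union>S)"
proof -
  have "- (K \<union> \<Union>S) = \<Union>(components (- K) - S)"
  proof
    show "- (K \<union> \<Union>S) \<subseteq> \<Union>(components (- K) - S)"
      using Union_components[of "- K"] by blast
    show "\<Union>(components (- K) - S) \<subseteq> - (K \<union> \<Union>S)"
      using assms(2) components_nonoverlap[of _ "- K"] in_components_subset[of _ "- K"] by blast
  qed
  moreover have "open (\<Union>(components (- K) - S))"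
    using assms(1) open_components[of "- K"] by (intro open_Union) (auto simp: open_Compl)
  ultimately show ?thesis by (simp add: closed_def)
qed

lemma frontier_Un_Union_components_subset:
  fixes K :: "'a::real_normed_vector set"
  assumes "closed K" and "S \<subseteq> components (- K)"
  shows "frontier (K \<union> \<Union>S) \<subseteq> frontier K"
proof
  fix x assume x: "x \<in> frontier (K \<union> \<Union>S)"
  then have x_notin: "x \<notin> interior (K \<union> \<Union>S)" by (simp add: frontier_def)
  have "x \<in> K \<union> \<Union>S"
    using frontier_subset_closed[OF closed_Un_Union_components[OF assms]] x by (rule subsetD)
  moreover have "x \<notin> C" if "C \<in> S" for C
  proof
    assume "x \<in> C"
    have "open C" using that assms open_components[of "- K" C] by (auto simp: open_Compl)
    moreover have "C \<subseteq> K \<union> \<Union>S" using that by blast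
    ultimately have "C \<subseteq> interior (K \<union> \<Union>S)" by (intro interior_maximal)
    then have "x \<in> interior (K \<union> \<Union>S)" using \<open>x \<in> C\<close> ..
    with x_notin show False ..
  qed
  ultimately have "x \<in> K" by blast
  moreover have "x \<notin> interior K" using x_notin interior_mono[of K "K \<union> \<Union>S"] by blast
  ultimately show "x \<in> frontier K" using closure_subset[of K] by (auto simp: frontier_def)
qed

lemma eq_Un_components_meeting:
  assumes "K \<subseteq> M" and "frontier M \<subseteq> K"
  shows "M = K \<union> \<Union>{C \<in> components (- K). C \<inter> M \<noteq> {}}"
proof
  show "M \<subseteq> K \<union> \<Union>{C \<in> components (- K). C \<inter> M \<noteq> {}}"
    using Union_components[of "- K"] by blast
  have "C \<subseteq> M" if C: "C \<in> components (- K)" "C \<inter> M \<noteq> {}" for C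
  proof (rule ccontr)
    assume "\<not> C \<subseteq> M"
    then obtain y where "y \<in> C" "y \<in> frontier M"
      using connected_Int_frontier[OF in_components_connected[OF C(1)] C(2)] by blast
    then show False using assms(2) in_components_subset[OF C(1)] by blast
  qed
  then show "K \<union> \<Union>{C \<in> components (- K). C \<inter> M \<noteq> {}} \<subseteq> M" using assms(1) by blast
qed

lemma infdist_eq_if_frontier_subset:
  fixes x :: "'a::real_normed_vector"
  assumes "K \<subseteq> M" and "K \<noteq> {}" and "frontier M \<subseteq> K" and "x \<notin> M"
  shows "infdist x M = infdist x K"
proof (rule antisym)
  show "infdist x M \<le> infdist x K" using assms(1,2) by (rule infdist_mono)
  have "infdist x K \<le> dist x y" if y: "y \<in> M" for y
  proof -
    obtain w where w: "w \<in> closed_segment x y" "w \<in> frontier M"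
      using connected_Int_frontier[of "closed_segment x y" M] assms(4) y by auto
    then have "infdist x K \<le> dist x w" using assms(3) by (intro infdist_le) blast
    also have "\<dots> \<le> dist x y" using segment_bound1[OF w(1)] by (simp add: dist_norm norm_minus_commute)
    finally show ?thesis .
  qed
  moreover have "M \<noteq> {}" using assms(1,2) by blast
  ultimately show "infdist x K \<le> infdist x M"
    unfolding infdist_notempty[OF \<open>M \<noteq> {}\<close>] by (intro cINF_greatest) auto
qed

lemma DC_on_infdist_if_frontier_subset:
  fixes K M :: "'a::real_normed_vector set"
  assumes "closed K" and "closed M" and "K \<subseteq> M" and "K \<noteq> {}" and "frontier M \<subseteq> K"
    and "DC_on UNIV (\<lambda>x. infdist x K)"
  shows "DC_on UNIV (\<lambda>x. infdist x M)"
proof -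
  obtain g h where g: "convex_on UNIV g" and h: "convex_on UNIV h"
    and gh: "\<And>x. infdist x K = g x - h x"
    using assms(6) unfolding DC_on_def by auto
  define U where "U = M - K"
  have "U = interior M - K"
    using assms(2,5) interior_subset[of M] by (auto simp: U_def frontier_def)
  then have "open U" using assms(1) by (simp add: open_Diff)
  moreover have "closure U \<subseteq> M" unfolding U_def using assms(2) by (simp add: closure_minimal)
  ultimately have frontier_U: "frontier U \<subseteq> K" by (auto simp: frontier_def interior_open U_def)
  have hg: "h x \<le> g x" for x using gh[of x] infdist_nonneg[of x K] by simp
  have "g x = h x" if "x \<in> frontier U" for x
    using gh[of x] frontier_U that by auto
  then have "convex_on UNIV (\<lambda>x. if x \<in> U then h x else g x)"
    by (rule convex_on_glue_open[OF g h hg \<open>open U\<close>])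
  moreover have "infdist x M = (if x \<in> U then h x else g x) - h x" for x
  proof (cases "x \<in> M")
    case True
    then show ?thesis using gh[of x] by (auto simp: U_def)
  next
    case False
    then show ?thesis
      using gh[of x] infdist_eq_if_frontier_subset[OF assms(3-5) False] by (simp add: U_def)
  qed
  ultimately show ?thesis unfolding DC_on_def using h by blast
qed

theorem lemma4p14:
  fixes K M :: "(real^2) set"
  assumes "closed K" and "closed M" and "K \<subseteq> M"
  shows "((\<exists>S. S \<subseteq> components (- K) \<and> M = K \<union> \<Union>S) \<longleftrightarrow> frontier M \<subseteq> frontier K)
         \<and> ((\<exists>S. S \<subseteq> components (- K) \<and> M = K \<union> \<Union>S) \<and> frontier M \<subseteq> frontier K
              \<and> K \<in> D2 \<longrightarrow> M \<in> D2)"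
proof -
  have "frontier K \<subseteq> K" using assms(1) by (rule frontier_subset_closed)
  have "\<exists>S. S \<subseteq> components (- K) \<and> M = K \<union> \<Union>S" if "frontier M \<subseteq> frontier K"
  proof -
    have "frontier M \<subseteq> K" using that \<open>frontier K \<subseteq> K\<close> by blast
    then show ?thesis
      using eq_Un_components_meeting[OF assms(3)]
      by (intro exI[of _ "{C \<in> components (- K). C \<inter> M \<noteq> {}}"]) auto
  qed
  moreover have "M \<in> D2" if "frontier M \<subseteq> frontier K" and "K \<in> D2"
  proof (cases "K = {}")
    case True
    then have "M = {} \<or> M = UNIV" using that(1) frontier_eq_empty by auto
    then show ?thesis
      by (auto simp: D2_def DC_on_def convex_on_const intro!: exI[of _ "\<lambda>x. 0"])
  next
    case False
    then show ?thesis
      using that assms DC_on_infdist_if_frontier_subset[of K M] \<open>frontier K \<subseteq> K\<close>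
      by (auto simp: D2_def)
  qed
  ultimately show ?thesis using frontier_Un_Union_components_subset[OF assms(1)] by blast
qed

end
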